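(* Let $N\ge3$ and let $V\colon\mathbb{R}^N\to\mathbb{R}$ be continuous with $\inf_{\mathbb{R}^N}V>0$. Suppose that there exist positive constants $c_1,c_2,m$ and a sequence $\{x_n\}_n$ in $\mathbb{R}^N$ such that $V(x_n)\to+\infty$ and \[ c_1V(x_n)\le V(x)\le c_2V(x_n)\quad\text{for all } x\in B_{m/\sqrt{V(x_n)}}(x_n)\text{ and all }n . \] Then $H^1_V(\mathbb{R}^N)\setminus L^\tau_V(\mathbb{R}^N)\neq\emptyset$ for every $\tau>2$.
   Context: $H^1_V(\mathbb{R}^N)$ is the completion of $C_0^\infty(\mathbb{R}^N)$ with respect to the norm $\|u\|_V=\left(\int_{\mathbb{R}^N}(|\nabla u|^2+V(x)|u|^2)\,dx\right)^{1/2}$. $L^\tau_V(\mathbb{R}^N)$ is the space of measurable $u$ with $\int_{\mathbb{R}^N}V(x)|u|^\tau dx<+\infty$. $B_r(x)$ denotes the open ball of radius $r$ centered at $x$. *)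

theory Defs
  imports "HOL-Analysis.Analysis"
begin

fun iter_pd :: "'a::euclidean_space list \<Rightarrow> ('a \<Rightarrow> real) \<Rightarrow> ('a \<Rightarrow> real)" where
  "iter_pd [] f = f"
| "iter_pd (i # is) f = (\<lambda>x. frechet_derivative (iter_pd is f) (at x) i)"

definition smooth_fun :: "('a::euclidean_space \<Rightarrow> real) \<Rightarrow> bool" where
  "smooth_fun f \<longleftrightarrow> (\<forall>is. set is \<subseteq> Basis \<longrightarrow>
      iter_pd is f differentiable_on UNIV \<and> continuous_on UNIV (iter_pd is f))"

definition Cc_inf :: "('a::euclidean_space \<Rightarrow> real) set" where
  "Cc_inf = {f. smooth_fun f \<and> compact (closure {x. f x \<noteq> 0})}"

definition grad_sq :: "('a::euclidean_space \<Rightarrow> real) \<Rightarrow> 'a \<Rightarrow> real" where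
  "grad_sq f x = (\<Sum>i\<in>Basis. (frechet_derivative f (at x) i)\<^sup>2)"

definition normV_sq :: "('a::euclidean_space \<Rightarrow> real) \<Rightarrow> ('a \<Rightarrow> real) \<Rightarrow> ennreal" where
  "normV_sq V f = (\<integral>\<^sup>+ x. ennreal (grad_sq f x + V x * (f x)\<^sup>2) \<partial>lebesgue)"

text \<open>Concrete realization of the completion H^1_V: functions u that are the weighted-L^2 limit
  of a sequence of test functions which is Cauchy in the norm ||.||_V.\<close>
definition H1V :: "('a::euclidean_space \<Rightarrow> real) \<Rightarrow> ('a \<Rightarrow> real) set" where
  "H1V V = {u. u \<in> borel_measurable lebesgue \<and>
     (\<exists>\<phi>::nat \<Rightarrow> 'a \<Rightarrow> real. (\<forall>k. \<phi> k \<in> Cc_inf) \<and>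
        (\<forall>e>0. \<exists>K. \<forall>k\<ge>K. \<forall>l\<ge>K. normV_sq V (\<lambda>x. \<phi> k x - \<phi> l x) < ennreal e) \<and>
        ((\<lambda>k. \<integral>\<^sup>+ x. ennreal (V x * (\<phi> k x - u x)\<^sup>2) \<partial>lebesgue) \<longlonglongrightarrow> 0))}"

definition LV :: "('a::euclidean_space \<Rightarrow> real) \<Rightarrow> real \<Rightarrow> ('a \<Rightarrow> real) set" where
  "LV V \<tau> = {u. u \<in> borel_measurable lebesgue \<and>
     (\<integral>\<^sup>+ x. ennreal (V x * \<bar>u x\<bar> powr \<tau>) \<partial>lebesgue) < \<infinity>}"

end

theory Submission
  imports Defs "HOL-Computational_Algebra.Polynomial"
begin

(* Choose centres c = x n escaping to infinity and place at c a bump of radius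
   r = m / sqrt (V c) and height a; on its support V is comparable to V c = m^2 / r^2.
   The H^1_V energy of the bump is of order a^2 r^(N-2) and its weighted L^tau mass of order
   a^tau r^(N-2). As N >= 3, r^(N-2) -> 0, so the k-th bump can be given energy 4^-k and mass
   at least k. The bumps are nonnegative with supports escaping to infinity, so their sum u is
   locally finite: the partial sums are Cauchy for the norm of H^1_V, which puts u in H^1_V,
   while the weighted L^tau integral of u dominates every single mass and is therefore infinite. *)

section \<open>A smooth step function on the real line\<close>

definition exp_recip_poly :: "real poly \<Rightarrow> real \<Rightarrow> real" where
  "exp_recip_poly p t = (if t > 0 then poly p (inverse t) * exp (- inverse t) else 0)"

(* d/dt (p(1/t) e^(-1/t)) = q(1/t) e^(-1/t) with q(s) = s^2 (p(s) - p'(s)) *)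
definition exp_recip_deriv_poly :: "real poly \<Rightarrow> real poly" where
  "exp_recip_deriv_poly p = [:0, 0, 1:] * (p - pderiv p)"

lemma tendsto_poly_mult_exp_neg_at_top: "((\<lambda>s. poly (p::real poly) s * exp (- s)) \<longlongrightarrow> 0) at_top"
proof -
  have "((\<lambda>s. \<Sum>i\<le>degree p. coeff p i * (s ^ i / exp s)) \<longlongrightarrow> 0) at_top"
    by (intro tendsto_null_sum tendsto_mult_right_zero tendsto_power_div_exp_0)
  moreover have "(\<lambda>s. poly p s * exp (- s)) = (\<lambda>s. \<Sum>i\<le>degree p. coeff p i * (s ^ i / exp s))"
    by (auto simp: poly_altdef sum_distrib_right exp_minus sum_divide_distrib field_simps)
  ultimately show ?thesis by simp
qed

lemma exp_recip_poly_has_real_derivative_0: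
  "(exp_recip_poly p has_real_derivative exp_recip_poly (exp_recip_deriv_poly p) 0) (at 0)"
proof -
  have "((\<lambda>h. (exp_recip_poly p (0 + h) - exp_recip_poly p 0) / h) \<longlongrightarrow> 0) (at 0)"
  proof (rule filterlim_split_at)
    have "\<forall>\<^sub>F h in at_left (0::real). 0 = (exp_recip_poly p (0 + h) - exp_recip_poly p 0) / h"
      by (auto simp: exp_recip_poly_def eventually_at_left_field intro: exI[of _ "-1"])
    then show "((\<lambda>h. (exp_recip_poly p (0 + h) - exp_recip_poly p 0) / h) \<longlongrightarrow> 0) (at_left 0)"
      by (rule Lim_transform_eventually[OF tendsto_const])
    have "((\<lambda>h. poly ([:0,1:] * p) (inverse h) * exp (- inverse h)) \<longlongrightarrow> 0) (at_right 0)"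
      by (rule filterlim_compose[OF tendsto_poly_mult_exp_neg_at_top filterlim_inverse_at_top_right])
    moreover have "\<forall>\<^sub>F h in at_right (0::real). poly ([:0,1:] * p) (inverse h) * exp (- inverse h)
        = (exp_recip_poly p (0 + h) - exp_recip_poly p 0) / h"
      by (auto simp: exp_recip_poly_def eventually_at_right_field field_simps intro: exI[of _ 1])
    ultimately show "((\<lambda>h. (exp_recip_poly p (0 + h) - exp_recip_poly p 0) / h) \<longlongrightarrow> 0) (at_right 0)"
      by (rule Lim_transform_eventually)
  qed
  then show ?thesis by (simp add: has_field_derivative_iff exp_recip_poly_def)
qed

lemma exp_recip_poly_has_real_derivative:
  "(exp_recip_poly p has_real_derivative exp_recip_poly (exp_recip_deriv_poly p) t) (at t)"
proof -
  consider "t > 0" | "t < 0" | "t = 0" by linarith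
  then show ?thesis
  proof cases
    case 1
    have "((\<lambda>t. poly p (inverse t) * exp (- inverse t)) has_real_derivative
       (poly (pderiv p) (inverse t) * (- inverse (t^2)) * exp (- inverse t) +
        poly p (inverse t) * (exp (- inverse t) * inverse (t^2)))) (at t)"
      using 1 by (auto intro!: derivative_eq_intros simp: power2_eq_square field_simps)
    moreover have "poly (pderiv p) (inverse t) * (- inverse (t^2)) * exp (- inverse t) +
        poly p (inverse t) * (exp (- inverse t) * inverse (t^2)) = exp_recip_poly (exp_recip_deriv_poly p) t"
      using 1 by (simp add: exp_recip_poly_def exp_recip_deriv_poly_def power2_eq_square field_simps)
    ultimately have "((\<lambda>t. poly p (inverse t) * exp (- inverse t)) has_real_derivative
        exp_recip_poly (exp_recip_deriv_poly p) t) (at t)"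
      by simp
    then show ?thesis
      by (rule has_field_derivative_transform_within_open[of _ _ _ "{0<..}"])
        (use 1 in \<open>auto simp: exp_recip_poly_def\<close>)
  next
    case 2
    have "((\<lambda>t. 0) has_real_derivative exp_recip_poly (exp_recip_deriv_poly p) t) (at t)"
      using 2 by (simp add: exp_recip_poly_def)
    then show ?thesis
      by (rule has_field_derivative_transform_within_open[of _ _ _ "{..<0}"])
        (use 2 in \<open>auto simp: exp_recip_poly_def\<close>)
  next
    case 3
    then show ?thesis using exp_recip_poly_has_real_derivative_0 by simp
  qed
qed

definition smooth_real :: "(real \<Rightarrow> real) \<Rightarrow> bool" where
  "smooth_real h \<longleftrightarrow> (\<forall>k x. (deriv ^^ k) h differentiable (at x))"

lemma smooth_real_deriv: "smooth_real h \<Longrightarrow> smooth_real (deriv h)"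
  unfolding smooth_real_def by (metis funpow_Suc_right o_apply)

lemma smooth_real_exp_recip_poly: "smooth_real (exp_recip_poly p)"
proof -
  have "(deriv ^^ k) (exp_recip_poly p) = exp_recip_poly ((exp_recip_deriv_poly ^^ k) p)" for k
    by (induction k) (auto simp: DERIV_imp_deriv[OF exp_recip_poly_has_real_derivative])
  then show ?thesis
    unfolding smooth_real_def using exp_recip_poly_has_real_derivative real_differentiable_def by metis
qed

section \<open>A class of smooth functions closed under partial differentiation\<close>

(* Every member is C^\<infinity>: this is proved by induction over the class, which is closed under
   partial derivatives, so no general calculus of iterated derivatives is needed. *)
inductive_set smooth_class :: "('a::euclidean_space \<Rightarrow> real) set" where
  const: "(\<lambda>x. c) \<in> smooth_class"
| inner_left: "(\<lambda>x. x \<bullet> b) \<in> smooth_class"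
| add: "f \<in> smooth_class \<Longrightarrow> g \<in> smooth_class \<Longrightarrow> (\<lambda>x. f x + g x) \<in> smooth_class"
| mult: "f \<in> smooth_class \<Longrightarrow> g \<in> smooth_class \<Longrightarrow> (\<lambda>x. f x * g x) \<in> smooth_class"
| comp: "smooth_real h \<Longrightarrow> f \<in> smooth_class \<Longrightarrow> (\<lambda>x. h (f x)) \<in> smooth_class"

lemma smooth_class_has_derivative:
  assumes "f \<in> smooth_class"
  shows "\<exists>f'. (\<forall>x. (f has_derivative f' x) (at x)) \<and> (\<forall>i. (\<lambda>x. f' x i) \<in> smooth_class)"
  using assms
proof induction
  case (const c)
  show ?case by (intro exI[of _ "\<lambda>x h. 0"]) (auto intro: smooth_class.const)
next
  case (inner_left b)
  have "((\<lambda>x. x \<bullet> b) has_derivative (\<lambda>h. h \<bullet> b)) (at x)" for x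
    by (rule bounded_linear_imp_has_derivative) (rule bounded_linear_inner_left)
  then show ?case by (intro exI[of _ "\<lambda>x h. h \<bullet> b"]) (auto intro: smooth_class.const)
next
  case (add f g)
  then obtain f' g' where f: "\<forall>x. (f has_derivative f' x) (at x)" "\<forall>i. (\<lambda>x. f' x i) \<in> smooth_class"
    and g: "\<forall>x. (g has_derivative g' x) (at x)" "\<forall>i. (\<lambda>x. g' x i) \<in> smooth_class" by blast
  have "(\<lambda>x. f' x i + g' x i) \<in> smooth_class" for i
    using f(2) g(2) by (intro smooth_class.add[of "\<lambda>x. f' x i"]) auto
  with f(1) g(1) show ?case
    by (intro exI[of _ "\<lambda>x h. f' x h + g' x h"]) (auto intro: has_derivative_add)
next
  case (mult f g)
  then obtain f' g' where f: "\<forall>x. (f has_derivative f' x) (at x)" "\<forall>i. (\<lambda>x. f' x i) \<in> smooth_class"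
    and g: "\<forall>x. (g has_derivative g' x) (at x)" "\<forall>i. (\<lambda>x. g' x i) \<in> smooth_class" by blast
  have "(\<lambda>x. f x * g' x i + f' x i * g x) \<in> smooth_class" for i
    using f(2) g(2) mult.hyps by (intro smooth_class.add[OF smooth_class.mult smooth_class.mult]) auto
  with f(1) g(1) show ?case
    by (intro exI[of _ "\<lambda>x h. f x * g' x h + f' x h * g x"]) (auto intro: has_derivative_mult)
next
  case (comp h f)
  then obtain f' where f: "\<forall>x. (f has_derivative f' x) (at x)" "\<forall>i. (\<lambda>x. f' x i) \<in> smooth_class"
    by blast
  have h': "(h has_derivative (\<lambda>v. deriv h y * v)) (at y)" for y
    using comp(1) unfolding smooth_real_def has_field_derivative_def[symmetric]
    by (metis DERIV_deriv_iff_real_differentiable funpow_0)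
  have "((\<lambda>x. h (f x)) has_derivative (\<lambda>v. deriv h (f x) * f' x v)) (at x)" for x
    using has_derivative_compose[OF f(1)[rule_format, of x] h'[of "f x"]] by (simp add: o_def)
  moreover have "(\<lambda>x. deriv h (f x) * f' x i) \<in> smooth_class" for i
    by (rule smooth_class.mult[OF smooth_class.comp[OF smooth_real_deriv[OF comp.hyps(1)] comp.hyps(2)]
          f(2)[rule_format]])
  ultimately show ?case by (intro exI[of _ "\<lambda>x v. deriv h (f x) * f' x v"]) simp
qed

lemma smooth_class_differentiable: "f \<in> smooth_class \<Longrightarrow> f differentiable (at x)"
  unfolding differentiable_def using smooth_class_has_derivative by metis

lemma smooth_class_has_frechet_derivative:
  "f \<in> smooth_class \<Longrightarrow> (f has_derivative frechet_derivative f (at x)) (at x)"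
  using frechet_derivative_works smooth_class_differentiable by blast

lemma smooth_class_partial: "f \<in> smooth_class \<Longrightarrow> (\<lambda>x. frechet_derivative f (at x) i) \<in> smooth_class"
proof -
  assume "f \<in> smooth_class"
  then obtain f' where f: "\<forall>x. (f has_derivative f' x) (at x)" "\<forall>i. (\<lambda>x. f' x i) \<in> smooth_class"
    using smooth_class_has_derivative by blast
  have "(\<lambda>x. frechet_derivative f (at x) i) = (\<lambda>x. f' x i)"
    using f(1) frechet_derivative_at by metis
  then show ?thesis using f(2) by simp
qed

lemma continuous_on_smooth_class: "f \<in> smooth_class \<Longrightarrow> continuous_on UNIV f"
  unfolding continuous_on_eq_continuous_at[OF open_UNIV]
  using smooth_class_differentiable differentiable_imp_continuous_within by blast

lemma smooth_class_iter_pd: "f \<in> smooth_class \<Longrightarrow> iter_pd is f \<in> smooth_class"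
  by (induction "is") (simp_all add: smooth_class_partial)

lemma smooth_fun_smooth_class: "f \<in> smooth_class \<Longrightarrow> smooth_fun f"
  unfolding smooth_fun_def differentiable_on_def
  by (simp add: smooth_class_iter_pd smooth_class_differentiable continuous_on_smooth_class)

lemma smooth_class_sum: "(\<forall>j\<in>F. f j \<in> smooth_class) \<Longrightarrow> (\<lambda>x. \<Sum>j\<in>F. f j x) \<in> smooth_class"
proof (induction F rule: infinite_finite_induct)
  case (insert j F)
  then show ?case using smooth_class.add[of "f j" "\<lambda>x. \<Sum>j\<in>F. f j x"] by simp
qed (simp_all add: smooth_class.const)

lemma smooth_class_inner_diff: "(\<lambda>x. (x - c) \<bullet> (x - c)) \<in> smooth_class"
proof -
  have "(\<lambda>x. \<Sum>i\<in>Basis. (x \<bullet> i + - (c \<bullet> i)) * (x \<bullet> i + - (c \<bullet> i))) \<in> smooth_class"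
    by (intro smooth_class_sum ballI smooth_class.mult smooth_class.add smooth_class.inner_left
        smooth_class.const)
  moreover have "(x - c) \<bullet> (x - c) = (\<Sum>i\<in>Basis. (x \<bullet> i + - (c \<bullet> i)) * (x \<bullet> i + - (c \<bullet> i)))" for x
    unfolding euclidean_inner[of "x - c" "x - c"] by (simp add: inner_diff_left)
  ultimately show ?thesis by simp
qed

lemma continuous_on_grad_sq: "f \<in> smooth_class \<Longrightarrow> continuous_on UNIV (grad_sq f)"
  unfolding grad_sq_def[abs_def]
  by (intro continuous_on_sum continuous_on_power continuous_on_smooth_class smooth_class_partial)

lemma grad_sq_nonneg: "grad_sq f y \<ge> 0"
  unfolding grad_sq_def by (intro sum_nonneg) auto

section \<open>Energy of sums\<close>

lemma lebesgue_measurable_continuous_on: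
  "continuous_on UNIV (f::'a::euclidean_space \<Rightarrow> real) \<Longrightarrow> f \<in> borel_measurable lebesgue"
  using borel_measurable_continuous_onI measurable_completion measurable_lborel2 by blast

lemma square_sum_le_weighted:
  fixes b w :: "'i \<Rightarrow> real"
  assumes "\<forall>j\<in>F. w j > 0"
  shows "(\<Sum>j\<in>F. b j)\<^sup>2 \<le> (\<Sum>j\<in>F. w j) * (\<Sum>j\<in>F. (b j)\<^sup>2 / w j)"
proof -
  have "(\<Sum>j\<in>F. sqrt (w j) * (b j / sqrt (w j)))\<^sup>2
      \<le> (\<Sum>j\<in>F. (sqrt (w j))\<^sup>2) * (\<Sum>j\<in>F. (b j / sqrt (w j))\<^sup>2)"
    by (rule Cauchy_Schwarz_ineq_sum)
  moreover have "(\<Sum>j\<in>F. sqrt (w j) * (b j / sqrt (w j))) = (\<Sum>j\<in>F. b j)"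
    using assms by (intro sum.cong) auto
  moreover have "(\<Sum>j\<in>F. (sqrt (w j))\<^sup>2) = (\<Sum>j\<in>F. w j)"
    using assms by (intro sum.cong) auto
  moreover have "(\<Sum>j\<in>F. (b j / sqrt (w j))\<^sup>2) = (\<Sum>j\<in>F. (b j)\<^sup>2 / w j)"
    using assms by (intro sum.cong) (auto simp: power_divide)
  ultimately show ?thesis by simp
qed

lemma energy_density_sum_le:
  fixes f :: "'i \<Rightarrow> 'a::euclidean_space \<Rightarrow> real"
  assumes f: "\<forall>j\<in>F. f j \<in> smooth_class" and w: "\<forall>j\<in>F. w j > 0"
    and \<sigma>: "\<sigma>\<^sup>2 = 1" and V: "V y \<ge> 0"
  shows "grad_sq (\<lambda>y. \<sigma> * (\<Sum>j\<in>F. f j y)) y + V y * (\<sigma> * (\<Sum>j\<in>F. f j y))\<^sup>2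
    \<le> (\<Sum>j\<in>F. w j) * (\<Sum>j\<in>F. (1 / w j) * (grad_sq (f j) y + V y * (f j y)\<^sup>2))"
proof -
  let ?W = "\<Sum>j\<in>F. w j"
  have \<sigma>_sq: "(\<sigma> * z)\<^sup>2 = z\<^sup>2" for z :: real using \<sigma> by (simp add: power_mult_distrib)
  have "((\<lambda>y. \<sigma> * (\<Sum>j\<in>F. f j y)) has_derivative
      (\<lambda>v. \<sigma> * (\<Sum>j\<in>F. frechet_derivative (f j) (at y) v))) (at y)"
    using f by (intro has_derivative_mult_right has_derivative_sum smooth_class_has_frechet_derivative) auto
  then have "frechet_derivative (\<lambda>y. \<sigma> * (\<Sum>j\<in>F. f j y)) (at y)
      = (\<lambda>v. \<sigma> * (\<Sum>j\<in>F. frechet_derivative (f j) (at y) v))"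
    by (rule frechet_derivative_at[symmetric])
  then have "grad_sq (\<lambda>y. \<sigma> * (\<Sum>j\<in>F. f j y)) y
      = (\<Sum>i\<in>Basis. (\<Sum>j\<in>F. frechet_derivative (f j) (at y) i)\<^sup>2)"
    unfolding grad_sq_def by (simp add: \<sigma>_sq)
  also have "\<dots> \<le> (\<Sum>i\<in>Basis. ?W * (\<Sum>j\<in>F. (frechet_derivative (f j) (at y) i)\<^sup>2 / w j))"
    by (intro sum_mono square_sum_le_weighted w)
  also have "\<dots> = ?W * (\<Sum>j\<in>F. (1 / w j) * grad_sq (f j) y)"
    unfolding grad_sq_def sum_distrib_left
    by (subst sum.swap) (simp add: sum_distrib_left sum_divide_distrib)
  finally have grad: "grad_sq (\<lambda>y. \<sigma> * (\<Sum>j\<in>F. f j y)) y \<le> ?W * (\<Sum>j\<in>F. (1 / w j) * grad_sq (f j) y)" .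
  have "V y * (\<sigma> * (\<Sum>j\<in>F. f j y))\<^sup>2 \<le> V y * (?W * (\<Sum>j\<in>F. (f j y)\<^sup>2 / w j))"
    unfolding \<sigma>_sq by (intro mult_left_mono square_sum_le_weighted w V)
  also have "\<dots> = ?W * (\<Sum>j\<in>F. (1 / w j) * (V y * (f j y)\<^sup>2))"
    by (simp add: sum_distrib_left mult_ac)
  finally have potential: "V y * (\<sigma> * (\<Sum>j\<in>F. f j y))\<^sup>2 \<le> ?W * (\<Sum>j\<in>F. (1 / w j) * (V y * (f j y)\<^sup>2))" .
  show ?thesis
    using add_mono[OF grad potential] by (simp add: distrib_left sum.distrib)
qed

(* \<sigma> = \<plusminus>1 lets one bound cover differences of partial sums taken in either order. *)
lemma normV_sq_sum_le:
  fixes V :: "'a::euclidean_space \<Rightarrow> real" and f :: "'i \<Rightarrow> 'a \<Rightarrow> real"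
  assumes V: "continuous_on UNIV V" "\<forall>y. V y \<ge> 0" and f: "\<forall>j\<in>F. f j \<in> smooth_class"
    and w: "\<forall>j\<in>F. w j > 0" and \<sigma>: "\<sigma>\<^sup>2 = 1"
  shows "normV_sq V (\<lambda>y. \<sigma> * (\<Sum>j\<in>F. f j y))
    \<le> ennreal (\<Sum>j\<in>F. w j) * (\<Sum>j\<in>F. ennreal (1 / w j) * normV_sq V (f j))"
proof -
  define I where "I j y = grad_sq (f j) y + V y * (f j y)\<^sup>2" for j y
  have I_nonneg: "I j y \<ge> 0" for j y
    unfolding I_def using grad_sq_nonneg[of "f j" y] V(2) by simp
  have I_meas: "I j \<in> borel_measurable lebesgue" if "j \<in> F" for j
    unfolding I_def[abs_def] using f that
    by (intro lebesgue_measurable_continuous_on continuous_intros continuous_on_grad_sq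
        continuous_on_smooth_class V(1)) auto
  have W_nonneg: "(\<Sum>j\<in>F. w j) \<ge> 0" using w by (intro sum_nonneg) auto
  have "normV_sq V (\<lambda>y. \<sigma> * (\<Sum>j\<in>F. f j y))
      \<le> (\<integral>\<^sup>+ y. ennreal ((\<Sum>j\<in>F. w j) * (\<Sum>j\<in>F. (1 / w j) * I j y)) \<partial>lebesgue)"
    unfolding normV_sq_def I_def using f w \<sigma> V(2)
    by (intro nn_integral_mono ennreal_leI energy_density_sum_le) auto
  also have "\<dots> = (\<integral>\<^sup>+ y. ennreal (\<Sum>j\<in>F. w j) * (\<Sum>j\<in>F. ennreal (1 / w j) * ennreal (I j y)) \<partial>lebesgue)"
  proof (intro nn_integral_cong)
    fix y
    have nonneg: "0 \<le> (1 / w j) * I j y" if "j \<in> F" for j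
      using w that I_nonneg[of j y] by (simp add: less_imp_le)
    have "(\<Sum>j\<in>F. ennreal (1 / w j) * ennreal (I j y)) = (\<Sum>j\<in>F. ennreal ((1 / w j) * I j y))"
      using w I_nonneg by (intro sum.cong refl ennreal_mult[symmetric]) (auto simp: less_imp_le)
    also have "\<dots> = ennreal (\<Sum>j\<in>F. (1 / w j) * I j y)"
      using nonneg by (rule sum_ennreal)
    finally show "ennreal ((\<Sum>j\<in>F. w j) * (\<Sum>j\<in>F. (1 / w j) * I j y))
        = ennreal (\<Sum>j\<in>F. w j) * (\<Sum>j\<in>F. ennreal (1 / w j) * ennreal (I j y))"
      using ennreal_mult[OF W_nonneg sum_nonneg[OF nonneg]] by simp
  qed
  also have "\<dots> = ennreal (\<Sum>j\<in>F. w j) * (\<Sum>j\<in>F. ennreal (1 / w j) * (\<integral>\<^sup>+ y. ennreal (I j y) \<partial>lebesgue))"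
    using I_meas by (simp add: nn_integral_cmult nn_integral_sum)
  finally show ?thesis
    unfolding normV_sq_def I_def .
qed

lemma sum_power_half_atLeastLessThan:
  "l \<le> k \<Longrightarrow> (\<Sum>j\<in>{l..<k}. (1/2::real)^j) = 2 * ((1/2)^l - (1/2)^k)"
proof (induction k)
  case (Suc k)
  show ?case
  proof (cases "l = Suc k")
    case False
    then have "l \<le> k" using Suc.prems by simp
    then have "(\<Sum>j\<in>{l..<Suc k}. (1/2::real)^j) = (1/2)^k + 2 * ((1/2)^l - (1/2)^k)"
      using Suc.IH by simp
    then show ?thesis by simp
  qed simp
qed simp

lemma normV_sq_block_le:
  fixes V :: "'a::euclidean_space \<Rightarrow> real" and f :: "nat \<Rightarrow> 'a \<Rightarrow> real"
  assumes V: "continuous_on UNIV V" "\<forall>y. V y \<ge> 0"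
    and f: "\<forall>j. f j \<in> smooth_class" "\<forall>j. normV_sq V (f j) \<le> ennreal ((1/4)^j)"
    and "l \<le> k" and \<sigma>: "\<sigma>\<^sup>2 = 1"
  shows "normV_sq V (\<lambda>y. \<sigma> * (\<Sum>j\<in>{l..<k}. f j y)) \<le> ennreal (4 * (1/2)^l)"
proof -
  define W where "W = (\<Sum>j\<in>{l..<k}. (1/2::real)^j)"
  have W_nonneg: "0 \<le> W"
    unfolding W_def by (intro sum_nonneg) auto
  have W_le: "W \<le> 2 * (1/2)^l"
    using sum_power_half_atLeastLessThan[OF \<open>l \<le> k\<close>] by (simp add: W_def)
  moreover have "(1/2::real)^l \<le> 1"
    by (intro power_le_one) auto
  ultimately have W_le_2: "W \<le> 2"
    by linarith
  have weight: "ennreal (1 / (1/2)^j) * ennreal ((1/4)^j) = ennreal ((1/2::real)^j)" for j :: nat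
  proof -
    have "ennreal (1 / (1/2)^j) * ennreal ((1/4)^j) = ennreal (1 / (1/2)^j * (1/4)^j)"
      by (rule ennreal_mult[symmetric]) auto
    also have "1 / (1/2)^j * (1/4::real)^j = (1/2)^j"
      by (simp add: power_divide field_simps power_mult_distrib[symmetric])
    finally show ?thesis .
  qed
  have "normV_sq V (\<lambda>y. \<sigma> * (\<Sum>j\<in>{l..<k}. f j y))
      \<le> ennreal W * (\<Sum>j\<in>{l..<k}. ennreal (1 / (1/2)^j) * normV_sq V (f j))"
    unfolding W_def using f V \<sigma> by (intro normV_sq_sum_le) auto
  also have "\<dots> \<le> ennreal W * (\<Sum>j\<in>{l..<k}. ennreal (1 / (1/2)^j) * ennreal ((1/4)^j))"
    using f(2) by (intro mult_left_mono sum_mono) auto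
  also have "\<dots> = ennreal W * ennreal W"
    unfolding weight W_def by simp
  also have "\<dots> = ennreal (W * W)"
    using W_nonneg by (simp add: ennreal_mult)
  also have "\<dots> \<le> ennreal (4 * (1/2)^l)"
  proof (rule ennreal_leI)
    have "W * W \<le> 2 * (2 * (1/2)^l)"
      using W_nonneg W_le W_le_2 by (intro mult_mono) auto
    then show "W * W \<le> 4 * (1/2)^l"
      by simp
  qed
  finally show ?thesis .
qed

section \<open>Bump functions\<close>

definition flat_step :: "real \<Rightarrow> real" where
  "flat_step = exp_recip_poly 1"

definition flat_step' :: "real \<Rightarrow> real" where
  "flat_step' = exp_recip_poly (exp_recip_deriv_poly 1)"

lemma flat_step_eq: "flat_step t = (if t > 0 then exp (- inverse t) else 0)"
  by (simp add: flat_step_def exp_recip_poly_def)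

lemma flat_step'_eq: "flat_step' t = (if t > 0 then (inverse t)\<^sup>2 * exp (- inverse t) else 0)"
  by (simp add: flat_step'_def exp_recip_poly_def exp_recip_deriv_poly_def power2_eq_square)

lemma flat_step_has_real_derivative: "(flat_step has_real_derivative flat_step' t) (at t)"
  unfolding flat_step_def flat_step'_def by (rule exp_recip_poly_has_real_derivative)

lemma smooth_real_flat_step: "smooth_real flat_step"
  unfolding flat_step_def by (rule smooth_real_exp_recip_poly)

lemma flat_step_bounds: "0 \<le> flat_step t" "flat_step t \<le> 1"
  by (auto simp: flat_step_eq)

lemma flat_step'_bounds: "0 \<le> flat_step' t" "flat_step' t \<le> 2"
proof -
  show "0 \<le> flat_step' t" by (simp add: flat_step'_eq)
  show "flat_step' t \<le> 2"
  proof (cases "t > 0")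
    case True
    define s where "s = inverse t"
    have s: "s > 0" using True by (simp add: s_def)
    have "1 + s + s\<^sup>2 / 2 \<le> exp s" using s by (intro exp_lower_Taylor_quadratic) simp
    then have "s\<^sup>2 / exp s \<le> 2" using s by (simp add: divide_le_eq)
    then show ?thesis using True by (simp add: flat_step'_eq s_def exp_minus divide_inverse)
  qed (simp add: flat_step'_eq)
qed

definition bump :: "'a::euclidean_space \<Rightarrow> real \<Rightarrow> 'a \<Rightarrow> real" where
  "bump c r y = flat_step (1/4 - (y - c) \<bullet> (y - c) / r\<^sup>2)"

lemma inner_diff_self_eq_dist: "(y - c) \<bullet> (y - c) = (dist c y)\<^sup>2"
  by (simp add: dot_square_norm dist_norm norm_minus_commute)

lemma bump_arg_nonpos: "r > 0 \<Longrightarrow> r/2 \<le> dist c y \<Longrightarrow> 1/4 - (y - c) \<bullet> (y - c) / r\<^sup>2 \<le> 0"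
  unfolding inner_diff_self_eq_dist
  using power_mono[of "r/2" "dist c y" 2] by (simp add: field_simps power_divide)

lemma bump_arg_ge: "r > 0 \<Longrightarrow> dist c y \<le> r/8 \<Longrightarrow> 15/64 \<le> 1/4 - (y - c) \<bullet> (y - c) / r\<^sup>2"
  unfolding inner_diff_self_eq_dist
  using power_mono[of "dist c y" "r/8" 2] by (simp add: field_simps power_divide)

lemma bump_nonneg: "0 \<le> bump c r y"
  unfolding bump_def by (rule flat_step_bounds)

lemma bump_eq_0: "r > 0 \<Longrightarrow> r/2 \<le> dist c y \<Longrightarrow> bump c r y = 0"
  unfolding bump_def flat_step_eq using bump_arg_nonpos by fastforce

lemma exp_neg_5_le_bump: "r > 0 \<Longrightarrow> dist c y \<le> r/8 \<Longrightarrow> exp (-5) \<le> bump c r y"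
proof -
  assume "r > 0" "dist c y \<le> r/8"
  then have t: "15/64 \<le> 1/4 - (y - c) \<bullet> (y - c) / r\<^sup>2" (is "_ \<le> ?t")
    by (rule bump_arg_ge)
  then have "inverse ?t \<le> inverse (15/64)"
    by (intro le_imp_inverse_le) auto
  then have "exp (-5) \<le> exp (- inverse ?t)"
    by simp
  moreover have "?t > 0"
    using t by linarith
  ultimately show ?thesis
    by (simp add: bump_def flat_step_eq)
qed

lemma smooth_class_scaled_bump: "(\<lambda>y. a * bump c r y) \<in> smooth_class"
proof -
  have "(\<lambda>y. 1/4 + (- inverse (r\<^sup>2)) * ((y - c) \<bullet> (y - c))) \<in> smooth_class"
    by (rule smooth_class.add[OF smooth_class.const smooth_class.mult[OF smooth_class.const smooth_class_inner_diff]])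
  moreover have "(\<lambda>y. 1/4 + (- inverse (r\<^sup>2)) * ((y - c) \<bullet> (y - c))) = (\<lambda>y. 1/4 - (y - c) \<bullet> (y - c) / r\<^sup>2)"
    by (simp add: fun_eq_iff field_simps)
  ultimately have "(\<lambda>y. 1/4 - (y - c) \<bullet> (y - c) / r\<^sup>2) \<in> smooth_class"
    by (simp only:)
  then show ?thesis
    unfolding bump_def by (rule smooth_class.mult[OF smooth_class.const smooth_class.comp[OF smooth_real_flat_step]])
qed

lemma sum_Basis_inner_sq: "(\<Sum>i\<in>Basis. (x \<bullet> i)\<^sup>2) = x \<bullet> (x::'a::euclidean_space)"
  by (subst (2) euclidean_inner) (simp add: power2_eq_square)

lemma grad_sq_scaled_bump:
  assumes "r \<noteq> 0"
  shows "grad_sq (\<lambda>y. a * bump c r y) y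
    = (2 * a * flat_step' (1/4 - (y - c) \<bullet> (y - c) / r\<^sup>2) / r\<^sup>2)\<^sup>2 * ((y - c) \<bullet> (y - c))"
proof -
  let ?s = "flat_step' (1/4 - (y - c) \<bullet> (y - c) / r\<^sup>2)"
  have "((\<lambda>y. 1/4 - (y - c) \<bullet> (y - c) / r\<^sup>2) has_derivative (\<lambda>v. - (2 * ((y - c) \<bullet> v)) / r\<^sup>2)) (at y)"
    using assms by (auto intro!: derivative_eq_intros simp: inner_commute field_simps)
  from has_derivative_compose[OF this flat_step_has_real_derivative[unfolded has_field_derivative_def]]
  have "((\<lambda>y. a * bump c r y) has_derivative (\<lambda>v. a * (?s * (- (2 * ((y - c) \<bullet> v)) / r\<^sup>2)))) (at y)"
    unfolding bump_def by (intro has_derivative_mult_right) (simp add: o_def)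
  then have "((\<lambda>y. a * bump c r y) has_derivative (\<lambda>v. - (2 * a * ?s / r\<^sup>2) * ((y - c) \<bullet> v))) (at y)"
    by (rule has_derivative_eq_rhs) (simp add: fun_eq_iff)
  then have "frechet_derivative (\<lambda>y. a * bump c r y) (at y) = (\<lambda>v. - (2 * a * ?s / r\<^sup>2) * ((y - c) \<bullet> v))"
    by (rule frechet_derivative_at[symmetric])
  then have "grad_sq (\<lambda>y. a * bump c r y) y = (\<Sum>i\<in>Basis. (2 * a * ?s / r\<^sup>2)\<^sup>2 * ((y - c) \<bullet> i)\<^sup>2)"
    unfolding grad_sq_def by (simp add: power_mult_distrib power_divide)
  also have "\<dots> = (2 * a * ?s / r\<^sup>2)\<^sup>2 * ((y - c) \<bullet> (y - c))"
    by (simp only: sum_distrib_left[symmetric] sum_Basis_inner_sq)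
  finally show ?thesis .
qed

lemma scaled_bump_energy_density_le:
  assumes r: "r > 0" and V: "V y \<ge> 0" "dist c y \<le> r/2 \<Longrightarrow> V y \<le> K"
  shows "ennreal (grad_sq (\<lambda>y. a * bump c r y) y + V y * (a * bump c r y)\<^sup>2)
    \<le> ennreal ((4 / r\<^sup>2 + K) * a\<^sup>2) * indicator (cball c (r/2)) y"
proof (cases "dist c y \<le> r/2")
  case True
  let ?s = "flat_step' (1/4 - (y - c) \<bullet> (y - c) / r\<^sup>2)"
  have s: "?s\<^sup>2 \<le> 4"
    using power_mono[OF flat_step'_bounds(2) flat_step'_bounds(1), of _ 2] by simp
  have d: "(y - c) \<bullet> (y - c) \<le> (r/2)\<^sup>2"
    unfolding inner_diff_self_eq_dist using True by (intro power_mono) auto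
  have "grad_sq (\<lambda>y. a * bump c r y) y = (2 * a * ?s / r\<^sup>2)\<^sup>2 * ((y - c) \<bullet> (y - c))"
    using r by (simp add: grad_sq_scaled_bump)
  also have "\<dots> \<le> (2 * a * ?s / r\<^sup>2)\<^sup>2 * (r/2)\<^sup>2"
    using d by (intro mult_left_mono) auto
  also have "\<dots> = a\<^sup>2 / r\<^sup>2 * ?s\<^sup>2"
    using r by (simp add: power2_eq_square field_simps)
  also have "\<dots> \<le> a\<^sup>2 / r\<^sup>2 * 4"
    using s by (intro mult_left_mono) auto
  finally have grad: "grad_sq (\<lambda>y. a * bump c r y) y \<le> 4 / r\<^sup>2 * a\<^sup>2"
    by (simp add: ac_simps)
  have "(bump c r y)\<^sup>2 \<le> 1"
    using bump_nonneg[of c r y] flat_step_bounds(2) unfolding bump_def by (simp add: power_le_one)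
  then have "V y * (bump c r y)\<^sup>2 \<le> K * 1"
    using V True by (intro mult_mono) auto
  then have "V y * (bump c r y)\<^sup>2 * a\<^sup>2 \<le> K * a\<^sup>2"
    by (intro mult_right_mono) auto
  then have "V y * (a * bump c r y)\<^sup>2 \<le> K * a\<^sup>2"
    by (simp add: power_mult_distrib ac_simps)
  then show ?thesis
    using True grad by (simp add: ennreal_leI distrib_right)
next
  case False
  then have "r/2 \<le> dist c y"
    by simp
  then have "bump c r y = 0" "flat_step' (1/4 - (y - c) \<bullet> (y - c) / r\<^sup>2) = 0"
    using bump_eq_0[OF r] bump_arg_nonpos[OF r] flat_step'_eq by fastforce+
  then show ?thesis
    using r by (simp add: grad_sq_scaled_bump)
qed

lemma emeasure_lebesgue_cball:
  "s \<ge> 0 \<Longrightarrow> emeasure lebesgue (cball (c::'a::euclidean_space) s) = ennreal (unit_ball_vol DIM('a) * s ^ DIM('a))"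
  using emeasure_cball[of s c] by simp

lemma normV_sq_scaled_bump_le:
  fixes V :: "'a::euclidean_space \<Rightarrow> real"
  assumes r: "r > 0" and V: "\<forall>y. V y \<ge> 0" "\<forall>y\<in>cball c (r/2). V y \<le> K"
  shows "normV_sq V (\<lambda>y. a * bump c r y)
    \<le> ennreal ((4 / r\<^sup>2 + K) * a\<^sup>2 * unit_ball_vol DIM('a) * (r/2) ^ DIM('a))"
proof -
  have "K \<ge> 0" using V r by (metis centre_in_cball half_gt_zero less_imp_le order_trans)
  then have C: "(4 / r\<^sup>2 + K) * a\<^sup>2 \<ge> 0" by simp
  have "normV_sq V (\<lambda>y. a * bump c r y)
      \<le> (\<integral>\<^sup>+ y. ennreal ((4 / r\<^sup>2 + K) * a\<^sup>2) * indicator (cball c (r/2)) y \<partial>lebesgue)"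
    unfolding normV_sq_def using r V by (intro nn_integral_mono scaled_bump_energy_density_le) auto
  also have "\<dots> = ennreal ((4 / r\<^sup>2 + K) * a\<^sup>2) * emeasure lebesgue (cball c (r/2))"
    by (intro nn_integral_cmult_indicator) simp
  also have "\<dots> = ennreal ((4 / r\<^sup>2 + K) * a\<^sup>2 * unit_ball_vol DIM('a) * (r/2) ^ DIM('a))"
    using r C emeasure_lebesgue_cball[of "r/2" c] by (simp add: ennreal_mult[symmetric] mult.assoc)
  finally show ?thesis .
qed

lemma scaled_bump_powr_integral_ge:
  fixes V :: "'a::euclidean_space \<Rightarrow> real"
  assumes r: "r > 0" and "a \<ge> 0" "\<tau> > 0" "L \<ge> 0"
    and V: "\<forall>y. V y \<ge> 0" "\<forall>y\<in>cball c (r/8). L \<le> V y"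
  shows "ennreal (L * (a * exp (-5)) powr \<tau> * unit_ball_vol DIM('a) * (r/8) ^ DIM('a))
    \<le> (\<integral>\<^sup>+ y. ennreal (V y * \<bar>a * bump c r y\<bar> powr \<tau>) \<partial>lebesgue)"
proof -
  let ?C = "L * (a * exp (-5)) powr \<tau>"
  have density: "ennreal ?C * indicator (cball c (r/8)) y \<le> ennreal (V y * \<bar>a * bump c r y\<bar> powr \<tau>)" for y
  proof (cases "y \<in> cball c (r/8)")
    case True
    then have "a * exp (-5) \<le> a * bump c r y"
      using r \<open>a \<ge> 0\<close> exp_neg_5_le_bump by (intro mult_left_mono) auto
    then have "(a * exp (-5)) powr \<tau> \<le> \<bar>a * bump c r y\<bar> powr \<tau>"
      using \<open>a \<ge> 0\<close> \<open>\<tau> > 0\<close> by (intro powr_mono2) auto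
    then have "?C \<le> V y * \<bar>a * bump c r y\<bar> powr \<tau>"
      using V True \<open>L \<ge> 0\<close> by (intro mult_mono) auto
    then show ?thesis using True by (simp add: ennreal_leI)
  qed simp
  have "ennreal (?C * unit_ball_vol DIM('a) * (r/8) ^ DIM('a)) = ennreal ?C * emeasure lebesgue (cball c (r/8))"
    using r \<open>L \<ge> 0\<close> emeasure_lebesgue_cball[of "r/8" c] by (simp add: ennreal_mult[symmetric] mult.assoc)
  also have "\<dots> = (\<integral>\<^sup>+ y. ennreal ?C * indicator (cball c (r/8)) y \<partial>lebesgue)"
    by (intro nn_integral_cmult_indicator[symmetric]) simp
  also have "\<dots> \<le> (\<integral>\<^sup>+ y. ennreal (V y * \<bar>a * bump c r y\<bar> powr \<tau>) \<partial>lebesgue)"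
    by (intro nn_integral_mono density)
  finally show ?thesis .
qed

lemma power_eq_power_diff_2_mult_sq:
  fixes x :: "'a::monoid_mult"
  assumes "2 \<le> n"
  shows "x ^ n = x ^ (n - 2) * x\<^sup>2"
proof -
  have "(n - 2) + 2 = n"
    using assms by simp
  then have "x ^ n = x ^ ((n - 2) + 2)"
    by (simp only:)
  also have "\<dots> = x ^ (n - 2) * x\<^sup>2"
    by (rule power_add)
  finally show ?thesis .
qed

(* With r = m / sqrt v as in the theorem, v * r^2 is the constant m^2. *)
lemma normV_sq_scaled_bump_le_comparable:
  fixes V :: "'a::euclidean_space \<Rightarrow> real"
  assumes N: "DIM('a) \<ge> 2" and V: "\<forall>y. 0 \<le> V y" "\<forall>y\<in>ball c r. V y \<le> c2 * v"
    and "r > 0" and \<mu>: "v * r\<^sup>2 = \<mu>"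
  shows "normV_sq V (\<lambda>y. a * bump c r y)
    \<le> ennreal ((4 + c2 * \<mu>) * unit_ball_vol DIM('a) * a\<^sup>2 * r ^ (DIM('a) - 2))"
proof -
  let ?\<omega> = "unit_ball_vol DIM('a)"
  have "0 \<le> c2 * v"
    using V \<open>r > 0\<close> by (meson centre_in_ball order_trans)
  have "normV_sq V (\<lambda>y. a * bump c r y) \<le> ennreal ((4 / r\<^sup>2 + c2 * v) * a\<^sup>2 * ?\<omega> * (r/2) ^ DIM('a))"
    using \<open>r > 0\<close> V by (intro normV_sq_scaled_bump_le) auto
  also have "\<dots> \<le> ennreal ((4 + c2 * \<mu>) * ?\<omega> * a\<^sup>2 * r ^ (DIM('a) - 2))"
  proof (rule ennreal_leI)
    have "(4 / r\<^sup>2 + c2 * v) * a\<^sup>2 * ?\<omega> * (r/2) ^ DIM('a) \<le> (4 / r\<^sup>2 + c2 * v) * a\<^sup>2 * ?\<omega> * r ^ DIM('a)"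
      using \<open>r > 0\<close> \<open>0 \<le> c2 * v\<close> by (intro mult_left_mono power_mono) auto
    also have "\<dots> = (4 + c2 * \<mu>) * ?\<omega> * a\<^sup>2 * r ^ (DIM('a) - 2)"
      using \<open>r > 0\<close> unfolding \<mu>[symmetric] power_eq_power_diff_2_mult_sq[OF N, of r]
      by (simp add: field_simps)
    finally show "(4 / r\<^sup>2 + c2 * v) * a\<^sup>2 * ?\<omega> * (r/2) ^ DIM('a) \<le> (4 + c2 * \<mu>) * ?\<omega> * a\<^sup>2 * r ^ (DIM('a) - 2)" .
  qed
  finally show ?thesis .
qed

lemma scaled_bump_powr_integral_ge_comparable:
  fixes V :: "'a::euclidean_space \<Rightarrow> real"
  assumes N: "DIM('a) \<ge> 2" and V: "\<forall>y. 0 \<le> V y" "\<forall>y\<in>ball c r. c1 * v \<le> V y"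
    and "r > 0" "a \<ge> 0" "\<tau> > 0" "c1 * v \<ge> 0" and \<mu>: "v * r\<^sup>2 = \<mu>"
  shows "ennreal (c1 * \<mu> * exp (-5) powr \<tau> * unit_ball_vol DIM('a) / 8 ^ DIM('a) * a powr \<tau> * r ^ (DIM('a) - 2))
    \<le> (\<integral>\<^sup>+ y. ennreal (V y * \<bar>a * bump c r y\<bar> powr \<tau>) \<partial>lebesgue)"
proof -
  have "c1 * \<mu> * exp (-5) powr \<tau> * unit_ball_vol DIM('a) / 8 ^ DIM('a) * a powr \<tau> * r ^ (DIM('a) - 2)
      = c1 * v * (a * exp (-5)) powr \<tau> * unit_ball_vol DIM('a) * (r/8) ^ DIM('a)"
    using \<open>a \<ge> 0\<close> unfolding \<mu>[symmetric] power_divide power_eq_power_diff_2_mult_sq[OF N, of r]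
    by (simp add: powr_mult field_simps)
  also have "ennreal \<dots> \<le> (\<integral>\<^sup>+ y. ennreal (V y * \<bar>a * bump c r y\<bar> powr \<tau>) \<partial>lebesgue)"
    using assms by (intro scaled_bump_powr_integral_ge) auto
  finally show ?thesis .
qed

section \<open>Summing the bumps\<close>

lemma summable_escaping:
  fixes f :: "nat \<Rightarrow> 'a::real_normed_vector \<Rightarrow> real"
  assumes "\<forall>k y. f k y \<noteq> 0 \<longrightarrow> real k < norm y"
  shows "summable (\<lambda>k. f k y)"
proof -
  have "(\<lambda>k. f k y) sums (\<Sum>k<nat \<lceil>norm y\<rceil>. f k y)"
  proof (rule sums_finite)
    fix k assume "k \<notin> {..<nat \<lceil>norm y\<rceil>}"
    then have "norm y \<le> real k" by (simp add: not_less nat_le_iff ceiling_le_iff)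
    then show "f k y = 0" using assms by force
  qed simp
  then show ?thesis by (rule sums_summable)
qed

lemma Cc_inf_sum_smooth_class:
  assumes "finite F" "\<forall>j\<in>F. f j \<in> smooth_class" "\<forall>j\<in>F. bounded {y. f j y \<noteq> 0}"
  shows "(\<lambda>y. \<Sum>j\<in>F. f j y) \<in> Cc_inf"
proof -
  have "{y. (\<Sum>j\<in>F. f j y) \<noteq> 0} \<subseteq> (\<Union>j\<in>F. {y. f j y \<noteq> 0})"
    by (auto dest: sum.not_neutral_contains_not_neutral)
  moreover have "bounded (\<Union>j\<in>F. {y. f j y \<noteq> 0})"
    using assms by (intro bounded_UN) auto
  ultimately have "compact (closure {y. (\<Sum>j\<in>F. f j y) \<noteq> 0})"
    using bounded_subset compact_closure by blast
  then show ?thesis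
    unfolding Cc_inf_def using assms(2) by (simp add: smooth_fun_smooth_class smooth_class_sum)
qed

lemma nn_integral_le_if_tendsto:
  fixes g :: "nat \<Rightarrow> 'a \<Rightarrow> ennreal"
  assumes "\<And>L. g L \<in> borel_measurable M" "\<And>x. (\<lambda>L. g L x) \<longlonglongrightarrow> h x"
    and "\<forall>\<^sub>F L in sequentially. (\<integral>\<^sup>+ x. g L x \<partial>M) \<le> B"
  shows "(\<integral>\<^sup>+ x. h x \<partial>M) \<le> B"
proof -
  have "(\<integral>\<^sup>+ x. h x \<partial>M) = (\<integral>\<^sup>+ x. liminf (\<lambda>L. g L x) \<partial>M)"
    using assms(2) by (intro nn_integral_cong lim_imp_Liminf[symmetric]) simp_all
  also have "\<dots> \<le> liminf (\<lambda>L. \<integral>\<^sup>+ x. g L x \<partial>M)"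
    using assms(1) by (rule nn_integral_liminf)
  also have "\<dots> \<le> limsup (\<lambda>L. \<integral>\<^sup>+ x. g L x \<partial>M)"
    by (rule Liminf_le_Limsup) simp
  also have "\<dots> \<le> B"
    using assms(3) by (rule Limsup_bounded)
  finally show ?thesis .
qed

lemma Cc_inf_continuous_on: "f \<in> Cc_inf \<Longrightarrow> continuous_on UNIV f"
  unfolding Cc_inf_def smooth_fun_def by (auto dest: spec[of _ "[]"])

lemma weighted_sq_dist_limit_le:
  fixes V :: "'a::euclidean_space \<Rightarrow> real"
  assumes V: "continuous_on UNIV V" and \<phi>: "\<And>k. continuous_on UNIV (\<phi> k)"
    and \<phi>_lim: "\<forall>y. (\<lambda>k. \<phi> k y) \<longlonglongrightarrow> u y"
    and bound: "\<forall>\<^sub>F l in sequentially. normV_sq V (\<lambda>y. \<phi> k y - \<phi> l y) \<le> B"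
  shows "(\<integral>\<^sup>+ y. ennreal (V y * (\<phi> k y - u y)\<^sup>2) \<partial>lebesgue) \<le> B"
proof (rule nn_integral_le_if_tendsto)
  show "(\<lambda>y. ennreal (V y * (\<phi> k y - \<phi> l y)\<^sup>2)) \<in> borel_measurable lebesgue" for l
    by (intro measurable_compose[OF _ measurable_ennreal] lebesgue_measurable_continuous_on
        continuous_intros V \<phi>)
  show "(\<lambda>l. ennreal (V y * (\<phi> k y - \<phi> l y)\<^sup>2)) \<longlonglongrightarrow> ennreal (V y * (\<phi> k y - u y)\<^sup>2)" for y
    using \<phi>_lim by (intro tendsto_ennrealI tendsto_intros) auto
  show "\<forall>\<^sub>F l in sequentially. (\<integral>\<^sup>+ y. ennreal (V y * (\<phi> k y - \<phi> l y)\<^sup>2) \<partial>lebesgue) \<le> B"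
    using bound
  proof eventually_elim
    case (elim l)
    have "(\<integral>\<^sup>+ y. ennreal (V y * (\<phi> k y - \<phi> l y)\<^sup>2) \<partial>lebesgue) \<le> normV_sq V (\<lambda>y. \<phi> k y - \<phi> l y)"
      unfolding normV_sq_def by (intro nn_integral_mono ennreal_leI) (simp add: grad_sq_nonneg)
    with elim show ?case
      by order
  qed
qed

lemma H1V_memberI:
  fixes V :: "'a::euclidean_space \<Rightarrow> real"
  assumes V: "continuous_on UNIV V"
    and \<phi>: "\<forall>k. \<phi> k \<in> Cc_inf" and \<phi>_lim: "\<forall>y. (\<lambda>k. \<phi> k y) \<longlonglongrightarrow> u y"
    and \<phi>_diff: "\<forall>k l. normV_sq V (\<lambda>y. \<phi> k y - \<phi> l y) \<le> ennreal (b (min k l))"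
    and b: "b \<longlonglongrightarrow> 0"
  shows "u \<in> H1V V"
proof -
  have \<phi>_cont: "continuous_on UNIV (\<phi> k)" for k
    using \<phi> by (simp add: Cc_inf_continuous_on)
  have "u \<in> borel_measurable lebesgue"
    using \<phi>_lim
    by (intro borel_measurable_LIMSEQ_metric[of \<phi>, OF lebesgue_measurable_continuous_on[OF \<phi>_cont]]) simp
  moreover have "\<forall>e>0. \<exists>K. \<forall>k\<ge>K. \<forall>l\<ge>K. normV_sq V (\<lambda>y. \<phi> k y - \<phi> l y) < ennreal e"
  proof (intro allI impI)
    fix e :: real assume "e > 0"
    then have "\<forall>\<^sub>F k in sequentially. b k < e"
      using b by (intro order_tendstoD(2))
    then obtain K where K: "\<forall>k\<ge>K. b k < e"
      by (auto simp: eventually_sequentially)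
    have "normV_sq V (\<lambda>y. \<phi> k y - \<phi> l y) < ennreal e" if "K \<le> k" "K \<le> l" for k l
    proof -
      have "ennreal (b (min k l)) < ennreal e"
        using K that \<open>e > 0\<close> by (intro ennreal_lessI) auto
      then show ?thesis
        using \<phi>_diff by (meson le_less_trans)
    qed
    then show "\<exists>K. \<forall>k\<ge>K. \<forall>l\<ge>K. normV_sq V (\<lambda>y. \<phi> k y - \<phi> l y) < ennreal e"
      by blast
  qed
  moreover have "(\<lambda>k. \<integral>\<^sup>+ y. ennreal (V y * (\<phi> k y - u y)\<^sup>2) \<partial>lebesgue) \<longlonglongrightarrow> 0"
  proof (rule tendsto_sandwich[OF _ _ tendsto_const])
    have "\<forall>\<^sub>F l in sequentially. normV_sq V (\<lambda>y. \<phi> k y - \<phi> l y) \<le> ennreal (b k)" for k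
      using \<phi>_diff unfolding eventually_sequentially by (metis min.absorb1)
    then show "\<forall>\<^sub>F k in sequentially. (\<integral>\<^sup>+ y. ennreal (V y * (\<phi> k y - u y)\<^sup>2) \<partial>lebesgue) \<le> ennreal (b k)"
      using weighted_sq_dist_limit_le[OF V \<phi>_cont \<phi>_lim] by simp
    show "(\<lambda>k. ennreal (b k)) \<longlonglongrightarrow> 0"
      using tendsto_ennrealI[OF b] by simp
  qed simp
  ultimately show ?thesis
    unfolding H1V_def using \<phi> by blast
qed

lemma suminf_in_H1V:
  fixes V :: "'a::euclidean_space \<Rightarrow> real" and f :: "nat \<Rightarrow> 'a \<Rightarrow> real"
  assumes V: "continuous_on UNIV V" "\<forall>y. 0 \<le> V y"
    and f: "\<forall>k. f k \<in> smooth_class" "\<forall>k. normV_sq V (f k) \<le> ennreal ((1/4)^k)"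
      "\<forall>k. bounded {y. f k y \<noteq> 0}" "\<forall>k y. f k y \<noteq> 0 \<longrightarrow> real k < norm y"
  shows "(\<lambda>y. \<Sum>k. f k y) \<in> H1V V"
proof (rule H1V_memberI[where \<phi> = "\<lambda>K y. \<Sum>j<K. f j y" and b = "\<lambda>k. 4 * (1/2) ^ k"])
  show "\<forall>K. (\<lambda>y. \<Sum>j<K. f j y) \<in> Cc_inf"
    using f(1,3) by (simp add: Cc_inf_sum_smooth_class)
  show "\<forall>y. (\<lambda>K. \<Sum>j<K. f j y) \<longlonglongrightarrow> (\<Sum>k. f k y)"
    using summable_LIMSEQ[OF summable_escaping[OF f(4)]] by simp
  show "\<forall>k l. normV_sq V (\<lambda>y. (\<Sum>j<k. f j y) - (\<Sum>j<l. f j y)) \<le> ennreal (4 * (1/2) ^ min k l)"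
  proof (intro allI)
    fix k l :: nat
    consider "l \<le> k" | "k \<le> l" by linarith
    then show "normV_sq V (\<lambda>y. (\<Sum>j<k. f j y) - (\<Sum>j<l. f j y)) \<le> ennreal (4 * (1/2) ^ min k l)"
    proof cases
      case 1
      have "(\<Sum>j<k. f j y) - (\<Sum>j<l. f j y) = 1 * (\<Sum>j\<in>{l..<k}. f j y)" for y
        using sum_diff_nat_ivl[OF le0 1, of "\<lambda>j. f j y"] unfolding lessThan_atLeast0 by simp
      then show ?thesis
        using normV_sq_block_le[OF V f(1,2) 1, where \<sigma> = 1] 1 by (simp add: min_absorb2)
    next
      case 2
      have "(\<Sum>j<k. f j y) - (\<Sum>j<l. f j y) = - 1 * (\<Sum>j\<in>{k..<l}. f j y)" for y
        using sum_diff_nat_ivl[OF le0 2, of "\<lambda>j. f j y"] unfolding lessThan_atLeast0 by linarith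
      then show ?thesis
        using normV_sq_block_le[OF V f(1,2) 2, where \<sigma> = "- 1"] 2 by (simp add: min_absorb1)
    qed
  qed
  show "(\<lambda>k. 4 * (1/2::real) ^ k) \<longlonglongrightarrow> 0"
    by (intro tendsto_mult_right_zero LIMSEQ_power_zero) simp
qed (rule V(1))

lemma suminf_notin_LV:
  fixes V :: "'a::euclidean_space \<Rightarrow> real" and f :: "nat \<Rightarrow> 'a \<Rightarrow> real"
  assumes V: "\<forall>y. 0 \<le> V y" and "\<tau> > 0"
    and f: "\<forall>k y. 0 \<le> f k y" "\<forall>k y. f k y \<noteq> 0 \<longrightarrow> real k < norm y"
      "\<forall>k. ennreal (real k) \<le> (\<integral>\<^sup>+ y. ennreal (V y * \<bar>f k y\<bar> powr \<tau>) \<partial>lebesgue)"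
  shows "(\<lambda>y. \<Sum>k. f k y) \<notin> LV V \<tau>"
proof
  let ?I = "\<integral>\<^sup>+ y. ennreal (V y * \<bar>\<Sum>k. f k y\<bar> powr \<tau>) \<partial>lebesgue"
  assume "(\<lambda>y. \<Sum>k. f k y) \<in> LV V \<tau>"
  then obtain t where t: "?I = ennreal t" "t \<ge> 0"
    unfolding LV_def by (cases ?I rule: ennreal_cases) auto
  have "ennreal (real k) \<le> ?I" for k
  proof -
    have "\<bar>f k y\<bar> \<le> \<bar>\<Sum>k. f k y\<bar>" for y
      using sum_le_suminf[OF summable_escaping[OF f(2)], of "{k}" y] f(1) by auto
    then have "(\<integral>\<^sup>+ y. ennreal (V y * \<bar>f k y\<bar> powr \<tau>) \<partial>lebesgue) \<le> ?I"
      using V \<open>\<tau> > 0\<close> by (intro nn_integral_mono ennreal_leI mult_left_mono powr_mono2) auto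
    then show ?thesis
      using f(3) order_trans by blast
  qed
  from this[of "nat \<lceil>t\<rceil> + 1"] have "ennreal (real (nat \<lceil>t\<rceil> + 1)) \<le> ennreal t"
    using t by simp
  then have "real (nat \<lceil>t\<rceil> + 1) \<le> t"
    using t(2) by (subst (asm) ennreal_le_iff) auto
  then show False
    by linarith
qed

definition escaping_bump ::
    "('a::euclidean_space \<Rightarrow> real) \<Rightarrow> real \<Rightarrow> real \<Rightarrow> real \<Rightarrow> real \<Rightarrow> ('a \<Rightarrow> real) \<Rightarrow> bool" where
  "escaping_bump V \<tau> R q K f \<longleftrightarrow> f \<in> smooth_class \<and> (\<forall>y. 0 \<le> f y) \<and> bounded {y. f y \<noteq> 0}
     \<and> (\<forall>y. f y \<noteq> 0 \<longrightarrow> R < norm y) \<and> normV_sq V f \<le> ennreal q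
     \<and> ennreal K \<le> (\<integral>\<^sup>+ y. ennreal (V y * \<bar>f y\<bar> powr \<tau>) \<partial>lebesgue)"

lemma le_powr_if_root_le:
  fixes M a p :: real
  assumes "0 \<le> M" "0 < p" "M powr (1 / p) \<le> a"
  shows "M \<le> a powr p"
proof -
  have "M = (M powr (1 / p)) powr p"
    using assms by (simp add: powr_powr)
  also have "\<dots> \<le> a powr p"
    using assms by (intro powr_mono2) auto
  finally show ?thesis .
qed

(* With the energy normalised to q, the mass is a^(tau - 2) times a multiple of q, so a large
   amplitude forces a large mass. *)
lemma escaping_bump_scaled_bump:
  fixes V :: "'a::euclidean_space \<Rightarrow> real"
  assumes N: "DIM('a) \<ge> 2" and V: "\<forall>y. 0 \<le> V y"
    and V_comparable: "\<forall>y\<in>ball c r. c1 * v \<le> V y \<and> V y \<le> c2 * v"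
    and "r > 0" and \<mu>: "v * r\<^sup>2 = \<mu>" "\<mu> > 0" and "c1 > 0" "c2 > 0" "q > 0" "\<tau> > 2" "a > 0"
    and energy: "(4 + c2 * \<mu>) * unit_ball_vol DIM('a) * a\<^sup>2 * r ^ (DIM('a) - 2) = q"
    and amplitude: "(max 0 K / (c1 * \<mu> * exp (-5) powr \<tau> * q / (8 ^ DIM('a) * (4 + c2 * \<mu>))))
      powr (1 / (\<tau> - 2)) \<le> a"
    and "R + r \<le> norm c"
  shows "escaping_bump V \<tau> R q K (\<lambda>y. a * bump c r y)"
proof -
  let ?\<beta> = "c1 * \<mu> * exp (-5) powr \<tau> * q / (8 ^ DIM('a) * (4 + c2 * \<mu>))"
  have "v * r\<^sup>2 > 0"
    using \<mu> by simp
  then have "v > 0"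
    using \<open>r > 0\<close> by (simp add: zero_less_mult_iff)
  have "0 < 4 + c2 * \<mu>" "?\<beta> > 0"
    using \<open>c1 > 0\<close> \<open>c2 > 0\<close> \<mu>(2) \<open>q > 0\<close> by (simp_all add: add_pos_pos)
  have support: "dist c y < r / 2" if "a * bump c r y \<noteq> 0" for y
    using that bump_eq_0[OF \<open>r > 0\<close>] by force
  have "0 \<le> max 0 K / ?\<beta>"
    using \<open>?\<beta> > 0\<close> by (intro divide_nonneg_pos) auto
  then have "max 0 K / ?\<beta> \<le> a powr (\<tau> - 2)"
    using le_powr_if_root_le[OF _ _ amplitude] \<open>\<tau> > 2\<close> by simp
  then have "max 0 K \<le> a powr (\<tau> - 2) * ?\<beta>"
    by (simp only: pos_divide_le_eq[OF \<open>?\<beta> > 0\<close>])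
  also have "?\<beta> = c1 * \<mu> * exp (-5) powr \<tau> * (unit_ball_vol DIM('a) * a\<^sup>2 * r ^ (DIM('a) - 2)) / 8 ^ DIM('a)"
    unfolding energy[symmetric] using \<open>0 < 4 + c2 * \<mu>\<close> by (simp add: divide_simps)
  also have "a powr (\<tau> - 2) * \<dots>
      = c1 * \<mu> * exp (-5) powr \<tau> * unit_ball_vol DIM('a) / 8 ^ DIM('a) * (a powr (\<tau> - 2) * a powr 2) * r ^ (DIM('a) - 2)"
    using \<open>a > 0\<close> by (simp add: powr_numeral ac_simps)
  also have "a powr (\<tau> - 2) * a powr 2 = a powr \<tau>"
    by (simp add: powr_add[symmetric])
  finally have "K \<le> c1 * \<mu> * exp (-5) powr \<tau> * unit_ball_vol DIM('a) / 8 ^ DIM('a) * a powr \<tau> * r ^ (DIM('a) - 2)"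
    by simp
  moreover have "ennreal (c1 * \<mu> * exp (-5) powr \<tau> * unit_ball_vol DIM('a) / 8 ^ DIM('a) * a powr \<tau> * r ^ (DIM('a) - 2))
      \<le> (\<integral>\<^sup>+ y. ennreal (V y * \<bar>a * bump c r y\<bar> powr \<tau>) \<partial>lebesgue)"
    using V_comparable \<open>r > 0\<close> \<open>a > 0\<close> \<open>\<tau> > 2\<close> \<open>c1 > 0\<close> \<open>v > 0\<close>
    by (intro scaled_bump_powr_integral_ge_comparable[OF N V _ _ _ _ _ \<mu>(1)]) auto
  ultimately have "ennreal K \<le> (\<integral>\<^sup>+ y. ennreal (V y * \<bar>a * bump c r y\<bar> powr \<tau>) \<partial>lebesgue)"
    by (meson ennreal_leI order_trans)
  moreover have "normV_sq V (\<lambda>y. a * bump c r y) \<le> ennreal q"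
    using normV_sq_scaled_bump_le_comparable[OF N V, of c r c2 v \<mu> a] V_comparable \<open>r > 0\<close> \<mu> energy
    by simp
  moreover have "bounded {y. a * bump c r y \<noteq> 0}"
    using support \<open>r > 0\<close> by (intro bounded_subset[OF bounded_ball, of _ c r]) fastforce
  moreover have "R < norm y" if "a * bump c r y \<noteq> 0" for y
    using support[OF that] \<open>R + r \<le> norm c\<close> \<open>r > 0\<close> norm_triangle_sub[of c y] by (simp add: dist_norm)
  ultimately show ?thesis
    unfolding escaping_bump_def using \<open>a > 0\<close> bump_nonneg[of c r] smooth_class_scaled_bump by auto
qed

lemma filterlim_sqrt_divide_power_at_top:
  fixes r :: "nat \<Rightarrow> real"
  assumes "r \<longlonglongrightarrow> 0" "\<forall>\<^sub>F n in sequentially. 0 < r n" "C > 0" "k > 0"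
  shows "filterlim (\<lambda>n. sqrt (C / r n ^ k)) at_top sequentially"
proof -
  have "(\<lambda>n. r n ^ k / C) \<longlonglongrightarrow> 0 ^ k / C"
    using assms(1,3) by (intro tendsto_intros) auto
  then have "(\<lambda>n. r n ^ k / C) \<longlonglongrightarrow> 0"
    using \<open>k > 0\<close> by (simp add: power_0_left)
  moreover have "\<forall>\<^sub>F n in sequentially. 0 < r n ^ k / C"
    using assms(2) by eventually_elim (simp add: \<open>C > 0\<close>)
  ultimately have "filterlim (\<lambda>n. inverse (r n ^ k / C)) at_top sequentially"
    by (rule filterlim_inverse_at_top)
  from filterlim_compose[OF sqrt_at_top this] show ?thesis
    by (simp add: o_def inverse_divide)
qed

lemma filterlim_norm_at_top_if_continuous:
  fixes V :: "'a::euclidean_space \<Rightarrow> real"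
  assumes "continuous_on UNIV V" and "filterlim (\<lambda>n. V (x n)) at_top F"
  shows "filterlim (\<lambda>n. norm (x n)) at_top F"
  unfolding filterlim_at_top
proof
  fix Z :: real
  have "bounded (V ` cball 0 Z)"
    by (intro compact_imp_bounded compact_continuous_image continuous_on_subset[OF assms(1)]) auto
  then obtain B where "\<forall>v\<in>V ` cball 0 Z. norm v \<le> B"
    unfolding bounded_iff by blast
  then have B: "V z \<le> B" if "z \<in> cball 0 Z" for z
    using that abs_le_D1[of "V z" B] by auto
  have "\<forall>\<^sub>F n in F. B < V (x n)"
    using assms(2) by (simp add: filterlim_at_top_dense)
  then show "\<forall>\<^sub>F n in F. Z \<le> norm (x n)"
  proof (rule eventually_mono)
    fix n assume "B < V (x n)"
    then have "x n \<notin> cball 0 Z"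
      using B by fastforce
    then show "Z \<le> norm (x n)"
      by simp
  qed
qed

(* As N \<ge> 3, the factor r^(N - 2) in the energy tends to 0, so the normalised amplitude tends to
   infinity. *)
lemma eventually_escaping_bump:
  fixes V :: "'a::euclidean_space \<Rightarrow> real" and x :: "nat \<Rightarrow> 'a"
  assumes N: "DIM('a) \<ge> 3" and V: "continuous_on UNIV V" "\<forall>y. 0 \<le> V y"
    and "c1 > 0" "c2 > 0" "m > 0"
    and V_lim: "filterlim (\<lambda>n. V (x n)) at_top sequentially"
    and V_comparable: "\<forall>n. \<forall>y\<in>ball (x n) (m / sqrt (V (x n))). c1 * V (x n) \<le> V y \<and> V y \<le> c2 * V (x n)"
    and "q > 0" "\<tau> > 2"
  shows "\<forall>\<^sub>F n in sequentially. \<exists>f. escaping_bump V \<tau> R q K f"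
proof -
  define r where "r n = m / sqrt (V (x n))" for n
  define A where "A = (4 + c2 * m\<^sup>2) * unit_ball_vol DIM('a)"
  define a where "a n = sqrt (q / A / r n ^ (DIM('a) - 2))" for n
  have "A > 0"
    using \<open>c2 > 0\<close> by (simp add: A_def add_pos_nonneg)
  have V_pos: "\<forall>\<^sub>F n in sequentially. 0 < V (x n)"
    using V_lim by (simp add: filterlim_at_top_dense)
  have r_lim: "r \<longlonglongrightarrow> 0"
    unfolding r_def[abs_def]
    by (intro tendsto_divide_0[OF tendsto_const] filterlim_at_top_imp_at_infinity
        filterlim_compose[OF sqrt_at_top V_lim])
  have "\<forall>\<^sub>F n in sequentially. 0 < r n"
    using V_pos by eventually_elim (simp add: r_def \<open>m > 0\<close>)
  then have "filterlim a at_top sequentially"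
    unfolding a_def using r_lim N \<open>q > 0\<close> \<open>A > 0\<close> by (intro filterlim_sqrt_divide_power_at_top) auto
  then have "\<forall>\<^sub>F n in sequentially. (max 0 K / (c1 * m\<^sup>2 * exp (-5) powr \<tau> * q
      / (8 ^ DIM('a) * (4 + c2 * m\<^sup>2)))) powr (1 / (\<tau> - 2)) \<le> a n"
    by (simp add: filterlim_at_top)
  moreover have "\<forall>\<^sub>F n in sequentially. r n < 1"
    using r_lim by (rule order_tendstoD) simp
  moreover have "\<forall>\<^sub>F n in sequentially. R + 1 \<le> norm (x n)"
    using filterlim_norm_at_top_if_continuous[OF V(1) V_lim] by (simp add: filterlim_at_top)
  ultimately show ?thesis
    using V_pos
  proof eventually_elim
    case (elim n)
    then have "r n > 0" "V (x n) * (r n)\<^sup>2 = m\<^sup>2"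
      using \<open>m > 0\<close> by (auto simp: r_def power_divide)
    moreover have "0 < q / A / r n ^ (DIM('a) - 2)"
      using \<open>r n > 0\<close> \<open>q > 0\<close> \<open>A > 0\<close> by simp
    then have "a n > 0" "(4 + c2 * m\<^sup>2) * unit_ball_vol DIM('a) * (a n)\<^sup>2 * r n ^ (DIM('a) - 2) = q"
      using \<open>r n > 0\<close> \<open>A > 0\<close> unfolding a_def by (simp_all add: A_def[symmetric])
    moreover have "\<forall>y\<in>ball (x n) (r n). c1 * V (x n) \<le> V y \<and> V y \<le> c2 * V (x n)"
      using V_comparable by (simp add: r_def)
    ultimately have "escaping_bump V \<tau> R q K (\<lambda>y. a n * bump (x n) (r n) y)"
      using elim N V(2) \<open>m > 0\<close> \<open>c1 > 0\<close> \<open>c2 > 0\<close> \<open>q > 0\<close> \<open>\<tau> > 2\<close>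
      by (intro escaping_bump_scaled_bump) auto
    then show ?case
      by blast
  qed
qed

theorem theorem2p3:
  fixes V :: "'a::euclidean_space \<Rightarrow> real"
    and x :: "nat \<Rightarrow> 'a"
    and c1 c2 m :: real
  assumes "DIM('a) \<ge> 3"
    and "continuous_on UNIV V"
    and "\<exists>c>0. \<forall>y. c \<le> V y"
    and "c1 > 0" and "c2 > 0" and "m > 0"
    and "filterlim (\<lambda>n. V (x n)) at_top sequentially"
    and "\<forall>n. \<forall>y\<in>ball (x n) (m / sqrt (V (x n))). c1 * V (x n) \<le> V y \<and> V y \<le> c2 * V (x n)"
  shows "\<forall>\<tau>>2. H1V V - LV V \<tau> \<noteq> {}"
proof (intro allI impI)
  fix \<tau> :: real assume "\<tau> > 2"
  have V_nonneg: "\<forall>y. 0 \<le> V y"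
    using assms(3) by (meson less_imp_le order_trans)
  have "\<exists>f. escaping_bump V \<tau> (real k) ((1/4)^k) (real k) f" for k
    using eventually_happens'[OF sequentially_bot
        eventually_escaping_bump[OF assms(1,2) V_nonneg assms(4-8) _ \<open>\<tau> > 2\<close>]]
    by simp
  then obtain f where f: "\<And>k. escaping_bump V \<tau> (real k) ((1/4)^k) (real k) (f k)"
    by metis
  note f = f[unfolded escaping_bump_def]
  have "(\<lambda>y. \<Sum>k. f k y) \<in> H1V V"
    by (rule suminf_in_H1V[OF assms(2) V_nonneg]) (use f in blast)+
  moreover have "(\<lambda>y. \<Sum>k. f k y) \<notin> LV V \<tau>"
    by (rule suminf_notin_LV[OF V_nonneg]) (use f \<open>\<tau> > 2\<close> in \<open>linarith | blast\<close>)+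
  ultimately show "H1V V - LV V \<tau> \<noteq> {}"
    by blast
qed

end
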